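(* (i) Let $\Delta(\Phi_{23},\Phi_{13},\Phi_{12})$ and $\Delta(\Phi_1,\Phi_2,\Phi_3)$ be reciprocal triangles (in the sense of the context) with interior points $\Phi$ and $\Phi_{123}$ respectively, and let $a,b,c,a_1,b_2,c_3\in\mathbb{R}$ be the dilations defined by $$\Phi_{12}-\Phi=c(\Phi_1-\Phi_2),\quad \Phi_{23}-\Phi=a(\Phi_2-\Phi_3),\quad \Phi_{13}-\Phi=b(\Phi_3-\Phi_1),$$ $$\Phi_{123}-\Phi_3=c_3(\Phi_{13}-\Phi_{23}),\quad \Phi_{123}-\Phi_1=a_1(\Phi_{12}-\Phi_{13}),\quad \Phi_{123}-\Phi_2=b_2(\Phi_{23}-\Phi_{12}).$$ Then $$a_1=-\frac{a}{ab+bc+ca},\qquad b_2=-\frac{b}{ab+bc+ca},\qquad c_3=-\frac{c}{ab+bc+ca}.$$ (ii) Conversely, let $\Phi_1,\Phi_2,\Phi_3,\Phi$ be four generic points of $\mathbb{C}$, let $a,b,c\in\mathbb{R}$ be arbitrary non-vanishing real numbers and define $a_1,b_2,c_3$ by the three formulas above. Then the linear system consisting of the six equations above, in the unknowns $\Phi_{12},\Phi_{23},\Phi_{13},\Phi_{123}$, is compatible and its unique solution gives reciprocal triangles $\Delta(\Phi_{23},\Phi_{13},\Phi_{12})$ and $\Delta(\Phi_1,\Phi_2,\Phi_3)$ with interior points $\Phi$ and $\Phi_{123}$ respectively.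
   Context: The plane is identified with $\mathbb{C}$. Reciprocal triangles: let $\Delta(\Phi_{23},\Phi_{13},\Phi_{12})$ be a non-degenerate triangle and $\Phi$ an additional point; let $\Delta(\Phi_1,\Phi_2,\Phi_3)$ be a non-degenerate triangle whose edges $(\Phi_1,\Phi_2)$, $(\Phi_2,\Phi_3)$, $(\Phi_3,\Phi_1)$ are parallel to the segments $(\Phi,\Phi_{12})$, $(\Phi,\Phi_{23})$, $(\Phi,\Phi_{13})$ respectively. The two triangles are called reciprocal (with interior points $\Phi$ and $\Phi_{123}$) if there is a point $\Phi_{123}$ such that the segments $(\Phi_1,\Phi_{123})$, $(\Phi_2,\Phi_{123})$, $(\Phi_3,\Phi_{123})$ are parallel to the edges $(\Phi_{13},\Phi_{12})$, $(\Phi_{12},\Phi_{23})$, $(\Phi_{23},\Phi_{13})$ respectively. Parallelism of segments is expressed by real (dilation) factors as in the displayed equations. *)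

theory Defs
  imports "HOL-Analysis.Analysis"
begin

definition nondeg_triangle :: "complex \<Rightarrow> complex \<Rightarrow> complex \<Rightarrow> bool" where
  "nondeg_triangle p q r \<longleftrightarrow> \<not> collinear {p, q, r}"

text \<open>Parallelism expressed by a real dilation factor: x = t y for some real t.\<close>
definition dilation :: "complex \<Rightarrow> complex \<Rightarrow> bool" where
  "dilation x y \<longleftrightarrow> (\<exists>t::real. x = complex_of_real t * y)"

definition reciprocal ::
  "complex \<Rightarrow> complex \<Rightarrow> complex \<Rightarrow> complex \<Rightarrow> complex \<Rightarrow> complex \<Rightarrow> complex \<Rightarrow> complex \<Rightarrow> bool" where
  "reciprocal P23 P13 P12 P P1 P2 P3 P123 \<longleftrightarrow>
     nondeg_triangle P23 P13 P12 \<and> nondeg_triangle P1 P2 P3 \<and>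
     dilation (P12 - P) (P1 - P2) \<and> dilation (P23 - P) (P2 - P3) \<and> dilation (P13 - P) (P3 - P1) \<and>
     dilation (P123 - P1) (P12 - P13) \<and> dilation (P123 - P2) (P23 - P12) \<and>
     dilation (P123 - P3) (P13 - P23)"

definition dil_system ::
  "complex \<Rightarrow> complex \<Rightarrow> complex \<Rightarrow> complex \<Rightarrow> complex \<Rightarrow> complex \<Rightarrow> complex \<Rightarrow> complex \<Rightarrow>
   real \<Rightarrow> real \<Rightarrow> real \<Rightarrow> real \<Rightarrow> real \<Rightarrow> real \<Rightarrow> bool" where
  "dil_system P P1 P2 P3 P12 P23 P13 P123 a b c a1 b2 c3 \<longleftrightarrow>
     P12 - P = complex_of_real c * (P1 - P2) \<and>
     P23 - P = complex_of_real a * (P2 - P3) \<and>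
     P13 - P = complex_of_real b * (P3 - P1) \<and>
     P123 - P3 = complex_of_real c3 * (P13 - P23) \<and>
     P123 - P1 = complex_of_real a1 * (P12 - P13) \<and>
     P123 - P2 = complex_of_real b2 * (P23 - P12)"

end

theory Submission
  imports Defs
begin

text \<open>Write \<open>u = \<Phi>\<^sub>1 - \<Phi>\<^sub>2\<close> and \<open>v = \<Phi>\<^sub>2 - \<Phi>\<^sub>3\<close>; these form a real basis of the plane exactly
  when the triangle \<open>\<Delta>(\<Phi>\<^sub>1,\<Phi>\<^sub>2,\<Phi>\<^sub>3)\<close> is non-degenerate. The first three dilation equations
  determine \<open>\<Phi>\<^sub>1\<^sub>2, \<Phi>\<^sub>2\<^sub>3, \<Phi>\<^sub>1\<^sub>3\<close>, and the last three give three expressions for \<open>\<Phi>\<^sub>1\<^sub>2\<^sub>3\<close>.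
  Their differences are real combinations of \<open>u\<close> and \<open>v\<close>, so they agree exactly when four
  real coefficients vanish, and this real linear system has the unique solution
  \<open>a\<^sub>1 = -a/S, b\<^sub>2 = -b/S, c\<^sub>3 = -c/S\<close> with \<open>S = ab + bc + ca \<noteq> 0\<close>.
  The triangle \<open>\<Delta>(\<Phi>\<^sub>2\<^sub>3,\<Phi>\<^sub>1\<^sub>3,\<Phi>\<^sub>1\<^sub>2)\<close> is then non-degenerate because its oriented area is
  \<open>S\<close> times that of \<open>\<Delta>(\<Phi>\<^sub>1,\<Phi>\<^sub>2,\<Phi>\<^sub>3)\<close>.\<close>

lemma collinear_0_iff_Im_cnj_mult: "collinear {0::complex, w, z} \<longleftrightarrow> Im (cnj w * z) = 0"
proof -
  have "Im (z / w) = Im (cnj w * z) / (cmod w)\<^sup>2"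
    by (subst complex_div_cnj) (simp add: mult.commute)
  then show ?thesis
    by (cases "w = 0") (simp_all add: collinear_iff_Reals complex_is_Real_iff)
qed

lemma collinear_3_iff_Im_cnj_mult:
  "collinear {p::complex, q, r} \<longleftrightarrow> Im (cnj (p - q) * (r - q)) = 0"
  by (simp add: collinear_3 collinear_0_iff_Im_cnj_mult)

lemma nondeg_triangle_iff_Im_cnj_mult:
  "nondeg_triangle p q r \<longleftrightarrow> Im (cnj (p - q) * (q - r)) \<noteq> 0"
proof -
  have "Im (cnj (p - q) * (r - q)) = - Im (cnj (p - q) * (q - r))"
    by (simp add: algebra_simps)
  then show ?thesis
    unfolding nondeg_triangle_def collinear_3_iff_Im_cnj_mult by (simp only: neg_equal_0_iff_equal)
qed

lemma Im_cnj_mult_real_combinations: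
  "Im (cnj (of_real \<alpha> * u + of_real \<beta> * v) * (of_real \<gamma> * u + of_real \<delta> * v)) =
     (\<alpha> * \<delta> - \<beta> * \<gamma>) * Im (cnj u * v)"
  by (simp add: algebra_simps)

lemma real_combination_eq_0_iff:
  assumes "Im (cnj u * v) \<noteq> 0"
  shows "of_real x * u + of_real y * v = 0 \<longleftrightarrow> x = 0 \<and> y = 0"
proof
  assume zero: "of_real x * u + of_real y * v = 0"
  have "y * Im (cnj u * v) = Im (cnj u * (of_real x * u + of_real y * v))"
    and "x * Im (cnj u * v) = - Im (cnj v * (of_real x * u + of_real y * v))"
    by (simp_all add: algebra_simps)
  then have "y * Im (cnj u * v) = 0" "x * Im (cnj u * v) = 0"
    unfolding zero by simp_all
  then show "x = 0 \<and> y = 0"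
    using assms by (simp only: mult_eq_0_iff) blast
qed simp

text \<open>The vanishing of the coefficients of \<open>\<Phi>\<^sub>1 - \<Phi>\<^sub>2\<close> and \<open>\<Phi>\<^sub>2 - \<Phi>\<^sub>3\<close> in the differences
  of the three expressions for \<open>\<Phi>\<^sub>1\<^sub>2\<^sub>3\<close> given by the dilation equations.\<close>
definition dilations_compatible :: "real \<Rightarrow> real \<Rightarrow> real \<Rightarrow> real \<Rightarrow> real \<Rightarrow> real \<Rightarrow> bool" where
  "dilations_compatible a b c a1 b2 c3 \<longleftrightarrow>
     1 + a1 * (b + c) + b2 * c = 0 \<and> a1 * b = b2 * a \<and>
     c3 * b = b2 * c \<and> 1 + b2 * a + c3 * (a + b) = 0"

lemma dilations_compatible_iff:
  "dilations_compatible a b c a1 b2 c3 \<longleftrightarrow>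
     a*b + b*c + c*a \<noteq> 0 \<and> a1 = - a / (a*b + b*c + c*a) \<and> b2 = - b / (a*b + b*c + c*a) \<and>
     c3 = - c / (a*b + b*c + c*a)"
proof
  assume compat: "dilations_compatible a b c a1 b2 c3"
  define S where "S = a*b + b*c + c*a"
  have "a + a1 * S = a * (1 + a1 * (b + c) + b2 * c) + c * (a1 * b - b2 * a)"
    and "b + b2 * S = b * (1 + a1 * (b + c) + b2 * c) - (b + c) * (a1 * b - b2 * a)"
    and "c + c3 * S = c * (1 + b2 * a + c3 * (a + b)) + a * (c3 * b - b2 * c)"
    unfolding S_def by (simp_all add: algebra_simps)
  with compat have "a + a1 * S = 0" "b + b2 * S = 0" "c + c3 * S = 0"
    unfolding dilations_compatible_def by simp_all
  moreover have "S \<noteq> 0"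
    using compat calculation unfolding dilations_compatible_def by auto
  ultimately show "S \<noteq> 0 \<and> a1 = - a / S \<and> b2 = - b / S \<and> c3 = - c / S"
    by (simp add: field_simps)
qed (auto simp: dilations_compatible_def field_simps)

lemma dil_system_iff:
  assumes "nondeg_triangle P1 P2 P3"
  shows "dil_system P P1 P2 P3 P12 P23 P13 P123 a b c a1 b2 c3 \<longleftrightarrow>
    P12 - P = of_real c * (P1 - P2) \<and> P23 - P = of_real a * (P2 - P3) \<and>
    P13 - P = of_real b * (P3 - P1) \<and> P123 - P1 = of_real a1 * (P12 - P13) \<and>
    dilations_compatible a b c a1 b2 c3"
proof -
  define u v where "u = P1 - P2" and "v = P2 - P3"
  have uv: "Im (cnj u * v) \<noteq> 0"
    using assms unfolding nondeg_triangle_iff_Im_cnj_mult u_def v_def .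
  have "P123 - P2 = of_real b2 * (P23 - P12) \<and> P123 - P3 = of_real c3 * (P13 - P23) \<longleftrightarrow>
          dilations_compatible a b c a1 b2 c3"
    if "P12 - P = of_real c * (P1 - P2)" "P23 - P = of_real a * (P2 - P3)"
      "P13 - P = of_real b * (P3 - P1)" "P123 - P1 = of_real a1 * (P12 - P13)"
  proof -
    from that have P12: "P12 = P + of_real c * u" and P23: "P23 = P + of_real a * v"
      and P13: "P13 = P - of_real b * (u + v)" and P123: "P123 = P1 + of_real a1 * (P12 - P13)"
      by (simp_all add: u_def v_def algebra_simps)
    define d2 d3 where "d2 = P123 - P2 - of_real b2 * (P23 - P12)"
      and "d3 = P123 - P3 - of_real c3 * (P13 - P23)"
    have d2: "d2 = of_real (1 + a1 * (b + c) + b2 * c) * u + of_real (a1 * b - b2 * a) * v"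
      and d3: "d3 - d2 = of_real (c3 * b - b2 * c) * u + of_real (1 + b2 * a + c3 * (a + b)) * v"
      unfolding d2_def d3_def by (simp only: P123 P12 P23 P13 u_def v_def; simp add: algebra_simps)+
    have "P123 - P2 = of_real b2 * (P23 - P12) \<longleftrightarrow> d2 = 0"
      and "P123 - P3 = of_real c3 * (P13 - P23) \<longleftrightarrow> d3 = 0"
      unfolding d2_def d3_def by simp_all
    then have "P123 - P2 = of_real b2 * (P23 - P12) \<and> P123 - P3 = of_real c3 * (P13 - P23) \<longleftrightarrow>
            d2 = 0 \<and> d3 - d2 = 0"
      by auto
    also have "\<dots> \<longleftrightarrow> dilations_compatible a b c a1 b2 c3"
      unfolding d3 unfolding d2 real_combination_eq_0_iff[OF uv] dilations_compatible_def by auto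
    finally show ?thesis .
  qed
  then show ?thesis
    unfolding dil_system_def by blast
qed

lemma reciprocal_imp_dilations:
  assumes "reciprocal P23 P13 P12 P P1 P2 P3 P123"
    and "dil_system P P1 P2 P3 P12 P23 P13 P123 a b c a1 b2 c3"
  shows "a1 = - a / (a*b + b*c + c*a) \<and> b2 = - b / (a*b + b*c + c*a) \<and>
    c3 = - c / (a*b + b*c + c*a)"
proof -
  have "nondeg_triangle P1 P2 P3"
    using assms(1) unfolding reciprocal_def by blast
  with assms(2) have "dilations_compatible a b c a1 b2 c3"
    using dil_system_iff by blast
  then show ?thesis
    unfolding dilations_compatible_iff by blast
qed

lemma dil_system_ex1:
  assumes "nondeg_triangle P1 P2 P3" and "a*b + b*c + c*a \<noteq> 0"
  shows "\<exists>!(P12, P23, P13, P123). dil_system P P1 P2 P3 P12 P23 P13 P123 a b c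
    (- a / (a*b + b*c + c*a)) (- b / (a*b + b*c + c*a)) (- c / (a*b + b*c + c*a))"
proof -
  have "dilations_compatible a b c (- a / (a*b + b*c + c*a)) (- b / (a*b + b*c + c*a))
      (- c / (a*b + b*c + c*a))"
    using assms(2) unfolding dilations_compatible_iff by simp
  then show ?thesis
    unfolding dil_system_iff[OF assms(1)] diff_eq_eq by auto
qed

lemma nondeg_triangle_dilated:
  assumes "nondeg_triangle P1 P2 P3" and "a*b + b*c + c*a \<noteq> 0"
    and "P12 - P = of_real c * (P1 - P2)" "P23 - P = of_real a * (P2 - P3)"
      "P13 - P = of_real b * (P3 - P1)"
  shows "nondeg_triangle P23 P13 P12"
proof -
  define u v where "u = P1 - P2" and "v = P2 - P3"
  from assms(3-5) have P12: "P12 = P + of_real c * u" and P23: "P23 = P + of_real a * v"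
    and P13: "P13 = P - of_real b * (u + v)"
    by (simp_all add: u_def v_def algebra_simps)
  have "P23 - P13 = of_real b * u + of_real (a + b) * v"
    and "P13 - P12 = of_real (- (b + c)) * u + of_real (- b) * v"
    by (simp only: P12 P23 P13; simp add: algebra_simps)+
  then have "Im (cnj (P23 - P13) * (P13 - P12)) = (b * - b - (a + b) * - (b + c)) * Im (cnj u * v)"
    by (simp only: Im_cnj_mult_real_combinations)
  also have "b * - b - (a + b) * - (b + c) = a*b + b*c + c*a"
    by (simp add: algebra_simps)
  finally have "Im (cnj (P23 - P13) * (P13 - P12)) = (a*b + b*c + c*a) * Im (cnj u * v)" .
  then show ?thesis
    using assms(1,2) unfolding nondeg_triangle_iff_Im_cnj_mult u_def v_def by simp
qed

lemma dil_system_imp_reciprocal: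
  assumes "nondeg_triangle P1 P2 P3" and "a*b + b*c + c*a \<noteq> 0"
    and "dil_system P P1 P2 P3 P12 P23 P13 P123 a b c a1 b2 c3"
  shows "reciprocal P23 P13 P12 P P1 P2 P3 P123"
proof -
  have "nondeg_triangle P23 P13 P12"
    using nondeg_triangle_dilated[OF assms(1,2)] assms(3) unfolding dil_system_def by blast
  then show ?thesis
    using assms(1,3) unfolding reciprocal_def dil_system_def dilation_def by blast
qed

theorem theorem1:
  shows "(\<forall>P P1 P2 P3 P12 P23 P13 P123 (a::real) b c a1 b2 c3.
            reciprocal P23 P13 P12 P P1 P2 P3 P123 \<and>
            dil_system P P1 P2 P3 P12 P23 P13 P123 a b c a1 b2 c3 \<longrightarrow>
            a1 = - a / (a*b + b*c + c*a) \<and> b2 = - b / (a*b + b*c + c*a) \<and>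
            c3 = - c / (a*b + b*c + c*a))
       \<and> (\<forall>P P1 P2 P3 (a::real) b c.
            nondeg_triangle P1 P2 P3 \<and> a \<noteq> 0 \<and> b \<noteq> 0 \<and> c \<noteq> 0 \<and> a*b + b*c + c*a \<noteq> 0 \<longrightarrow>
            (let a1 = - a / (a*b + b*c + c*a); b2 = - b / (a*b + b*c + c*a);
                 c3 = - c / (a*b + b*c + c*a) in
              (\<exists>!(P12, P23, P13, P123). dil_system P P1 P2 P3 P12 P23 P13 P123 a b c a1 b2 c3) \<and>
              (\<forall>P12 P23 P13 P123. dil_system P P1 P2 P3 P12 P23 P13 P123 a b c a1 b2 c3 \<longrightarrow>
                  reciprocal P23 P13 P12 P P1 P2 P3 P123)))"
  apply (rule conjI; intro allI impI; elim conjE)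
  subgoal by (rule reciprocal_imp_dilations)
  subgoal unfolding Let_def
    by (intro conjI allI impI dil_system_ex1 dil_system_imp_reciprocal) assumption+
  done

end
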